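(* Let $\mathbf w\in\mathbb R^m$. The positional voting method $B_{\mathbf w}$ is Pareto efficient if and only if $\mathbf w$ is strictly decreasing, i.e. $\mathbf w(1)>\mathbf w(2)>\cdots>\mathbf w(m)$.
   Context: Fix an integer $n\ge 2$ and a set $\mathbf C$ of $n$ candidates. Fix a composition $\lambda=(\lambda_1,\dots,\lambda_m)$ of $n$ (positive integers with $\sum_i\lambda_i=n$), write $[m]=\{1,\dots,m\}$. A ballot is a function $b:\mathbf C\to[m]$ with $|b^{-1}(i)|=\lambda_i$ for every $i$; $\mathbf C_\lambda$ denotes the set of ballots. The profile space is $P=\mathbb R^{\mathbf C_\lambda}$ with basis $\{\delta_b\}$ (indicator functions) and inner product $\mathbf p\cdot\mathbf q=\sum_b\mathbf p(b)\mathbf q(b)$. For $\mathbf w\in\mathbb R^m$ (a function $[m]\to\mathbb R$) and $X\in\mathbf C$, $\mathbf v_X\in P$ is $\mathbf v_X(b)=\mathbf w(b(X))$; the positional voting method $B_{\mathbf w}:P\to\mathbb R^{\mathbf C}$ is $B_{\mathbf w}(\mathbf p)(X)=\mathbf p\cdot\mathbf v_X$. A profile $\mathbf p$ prefers $X$ unanimously to $Y$ if $\mathbf p(b)\ge 0$ for every ballot with $b(X)<b(Y)$, $\mathbf p(b)\le0$ for every ballot with $b(X)>b(Y)$, and $\mathbf p(b)\neq0$ for at least one ballot with $b(X)\ne b(Y)$ (no condition on ballots with $b(X)=b(Y)$). A map $F:P\to\mathbb R^{\mathbf C}$ is Pareto efficient if for every ordered pair of distinct candidates $X,Y$ and every profile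 $\mathbf p$ preferring $X$ unanimously to $Y$, $F(\mathbf p)(X)>F(\mathbf p)(Y)$. *)

theory Defs
  imports Complex_Main
begin

text \<open>Candidates: the elements of a finite type 'c (n = CARD('c)).
  A composition lambda of n is a list lam of positive naturals summing to n; m = length lam,
  and lambda_i = lam ! (i - 1) for i in {1..m}.
  A profile is a real-valued function on ballots (values outside the ballot set are ignored).
  Weight vectors w are functions nat => real, only w 1 .. w m matter.\<close>

definition is_composition :: "nat list \<Rightarrow> nat \<Rightarrow> bool" where
  "is_composition lam n \<longleftrightarrow> (\<forall>l\<in>set lam. 0 < l) \<and> sum_list lam = n"

definition ballots :: "nat list \<Rightarrow> ('c::finite \<Rightarrow> nat) set" where
  "ballots lam = {b. (\<forall>X. b X \<in> {1..length lam}) \<and>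
     (\<forall>i\<in>{1..length lam}. card {X. b X = i} = lam ! (i - 1))}"

definition positional_method ::
  "(nat \<Rightarrow> real) \<Rightarrow> nat list \<Rightarrow> (('c::finite \<Rightarrow> nat) \<Rightarrow> real) \<Rightarrow> 'c \<Rightarrow> real" where
  "positional_method w lam p X = (\<Sum>b\<in>ballots lam. p b * w (b X))"

definition prefers_unanimously ::
  "nat list \<Rightarrow> (('c::finite \<Rightarrow> nat) \<Rightarrow> real) \<Rightarrow> 'c \<Rightarrow> 'c \<Rightarrow> bool" where
  "prefers_unanimously lam p X Y \<longleftrightarrow>
     (\<forall>b\<in>ballots lam. b X < b Y \<longrightarrow> p b \<ge> 0) \<and>
     (\<forall>b\<in>ballots lam. b X > b Y \<longrightarrow> p b \<le> 0) \<and>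
     (\<exists>b\<in>ballots lam. b X \<noteq> b Y \<and> p b \<noteq> 0)"

definition pareto_efficient ::
  "nat list \<Rightarrow> ((('c::finite \<Rightarrow> nat) \<Rightarrow> real) \<Rightarrow> 'c \<Rightarrow> real) \<Rightarrow> bool" where
  "pareto_efficient lam F \<longleftrightarrow>
     (\<forall>X Y p. X \<noteq> Y \<longrightarrow> prefers_unanimously lam p X Y \<longrightarrow> F p X > F p Y)"

end

theory Submission
  imports Defs
begin

text \<open>If w is strictly decreasing, then B_w(p)(X) - B_w(p)(Y) is a sum over ballots of
  p(b) (w(b X) - w(b Y)); unanimity makes every term nonnegative and some term positive.
  Conversely, the profile consisting of a single ballot ranking X in position i and Y in
  position j gives B_w(p)(X) - B_w(p)(Y) = w i - w j, so Pareto efficiency forces w i > w j.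
  Such a ballot exists because all parts of the composition are positive.\<close>

lemma exists_map_with_fibre_cards:
  fixes S :: "'c set"
  assumes "finite S" "card S = sum_list lam"
  shows "\<exists>b::'c \<Rightarrow> nat. (\<forall>X\<in>S. b X \<in> {1..length lam}) \<and>
           (\<forall>i\<in>{1..length lam}. card {X\<in>S. b X = i} = lam ! (i - 1))"
  using assms
proof (induction lam arbitrary: S rule: rev_induct)
  case Nil
  then show ?case by auto
next
  case (snoc a lam)
  obtain T where T: "T \<subseteq> S" "card T = a"
    using obtain_subset_with_card_n[of a S] snoc.prems by auto
  have "card (S - T) = sum_list lam"
    using snoc.prems T finite_subset[OF T(1)] by (simp add: card_Diff_subset)
  then obtain b where b: "\<forall>X\<in>S - T. b X \<in> {1..length lam}"
     "\<forall>i\<in>{1..length lam}. card {X\<in>S - T. b X = i} = lam ! (i - 1)"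
    using snoc.IH[of "S - T"] snoc.prems by auto
  define b' where "b' X = (if X \<in> T then Suc (length lam) else b X)" for X
  have "\<forall>X\<in>S. b' X \<in> {1..length (lam @ [a])}"
    using b(1) by (force simp: b'_def)
  moreover have "card {X\<in>S. b' X = i} = (lam @ [a]) ! (i - 1)"
    if i: "i \<in> {1..length (lam @ [a])}" for i
  proof (cases "i = Suc (length lam)")
    case True
    have "{X\<in>S. b' X = i} = T"
      using T b(1) True by (force simp: b'_def)
    then show ?thesis using True T by (simp add: nth_append)
  next
    case False
    have "{X\<in>S. b' X = i} = {X\<in>S - T. b X = i}" using False by (auto simp: b'_def)
    then show ?thesis using b(2) i False by (auto simp: nth_append)
  qed
  ultimately show ?case by blast
qed

lemma ballots_nonempty:
  assumes "is_composition lam (card (UNIV :: 'c set))"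
  shows "ballots lam \<noteq> ({} :: ('c::finite \<Rightarrow> nat) set)"
proof -
  obtain b :: "'c \<Rightarrow> nat" where "\<forall>X. b X \<in> {1..length lam}"
    "\<forall>i\<in>{1..length lam}. card {X. b X = i} = lam ! (i - 1)"
    using exists_map_with_fibre_cards[of "UNIV :: 'c set" lam] assms
    by (auto simp: is_composition_def)
  then show ?thesis by (auto simp: ballots_def)
qed

lemma ballot_surj:
  assumes "is_composition lam n" "b \<in> ballots lam" "i \<in> {1..length lam}"
  obtains X where "b X = i"
proof -
  have "card {X. b X = i} > 0"
    using assms by (auto simp: ballots_def is_composition_def)
  then show ?thesis using that by fastforce
qed

lemma ballot_range:
  assumes "b \<in> ballots lam"
  shows "b X \<in> {1..length lam}"
  using assms by (auto simp: ballots_def)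

lemma finite_ballots: "finite (ballots lam :: ('c::finite \<Rightarrow> nat) set)"
proof -
  have "ballots lam \<subseteq> {f. \<forall>x. (x \<in> (UNIV::'c set) \<longrightarrow> f x \<in> {1..length lam}) \<and> (x \<notin> UNIV \<longrightarrow> f x = 0)}"
    by (auto simp: ballots_def)
  then show ?thesis
    using finite_set_of_finite_funs[of "UNIV::'c set" "{1..length lam}" 0] finite_subset by auto
qed

lemma positional_method_single_ballot:
  assumes "b \<in> ballots lam"
  shows "positional_method w lam (\<lambda>b'. if b' = b then 1 else 0) X = w (b X)"
proof -
  have "positional_method w lam (\<lambda>b'. if b' = b then 1 else 0) X
      = (\<Sum>b'\<in>ballots lam. if b' = b then w (b X) else 0)"
    unfolding positional_method_def by (rule sum.cong) auto
  then show ?thesis using assms by (simp add: sum.delta[OF finite_ballots])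
qed

lemma prefers_unanimously_single_ballot:
  assumes "b \<in> ballots lam" "b X < b Y"
  shows "prefers_unanimously lam (\<lambda>b'. if b' = b then 1 else 0) X Y"
  using assms unfolding prefers_unanimously_def by auto

lemma positional_method_diff:
  "positional_method w lam p X - positional_method w lam p Y
     = (\<Sum>b\<in>ballots lam. p b * (w (b X) - w (b Y)))"
  unfolding positional_method_def sum_subtractf[symmetric] by (simp add: right_diff_distrib)

lemma unanimous_ballot_term:
  assumes dec: "\<forall>i j. 1 \<le> i \<longrightarrow> i < j \<longrightarrow> j \<le> length lam \<longrightarrow> w i > w j"
    and pu: "prefers_unanimously lam p X Y" and b: "b \<in> ballots lam"
  shows "0 \<le> p b * (w (b X) - w (b Y))"
    and "b X \<noteq> b Y \<Longrightarrow> p b \<noteq> 0 \<Longrightarrow> 0 < p b * (w (b X) - w (b Y))"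
proof -
  have XY: "b X < b Y \<Longrightarrow> w (b X) > w (b Y)" "b Y < b X \<Longrightarrow> w (b Y) > w (b X)"
    using dec ballot_range[OF b, of X] ballot_range[OF b, of Y] by auto
  have p: "b X < b Y \<Longrightarrow> p b \<ge> 0" "b Y < b X \<Longrightarrow> p b \<le> 0"
    using pu b by (auto simp: prefers_unanimously_def)
  consider "b X < b Y" | "b Y < b X" | "b X = b Y" by linarith
  then show "0 \<le> p b * (w (b X) - w (b Y))"
    by cases (use XY p in \<open>auto intro: mult_nonpos_nonpos\<close>)
  show "0 < p b * (w (b X) - w (b Y))" if "b X \<noteq> b Y" "p b \<noteq> 0"
    using that XY p by (cases "b X < b Y") (auto simp: zero_less_mult_iff)
qed

lemma pareto_efficient_imp_strictly_decreasing:
  assumes comp: "is_composition lam (card (UNIV :: 'c set))"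
    and pe: "pareto_efficient lam (positional_method w lam :: (('c::finite \<Rightarrow> nat) \<Rightarrow> real) \<Rightarrow> 'c \<Rightarrow> real)"
    and ij: "1 \<le> i" "i < j" "j \<le> length lam"
  shows "w i > w j"
proof -
  obtain b :: "'c \<Rightarrow> nat" where b: "b \<in> ballots lam"
    using ballots_nonempty[OF comp] by blast
  obtain X where X: "b X = i" using ballot_surj[OF comp b, of i] ij by auto
  obtain Y where Y: "b Y = j" using ballot_surj[OF comp b, of j] ij by auto
  let ?p = "\<lambda>b'. if b' = b then 1 else (0::real)"
  have "prefers_unanimously lam ?p X Y"
    using prefers_unanimously_single_ballot[OF b] X Y ij by simp
  moreover have "X \<noteq> Y" using X Y ij by auto
  ultimately have "positional_method w lam ?p X > positional_method w lam ?p Y"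
    using pe unfolding pareto_efficient_def by blast
  then show ?thesis using X Y by (simp add: positional_method_single_ballot[OF b])
qed

lemma strictly_decreasing_imp_pareto_efficient:
  assumes dec: "\<forall>i j. 1 \<le> i \<longrightarrow> i < j \<longrightarrow> j \<le> length lam \<longrightarrow> w i > w j"
  shows "pareto_efficient lam (positional_method w lam :: (('c::finite \<Rightarrow> nat) \<Rightarrow> real) \<Rightarrow> 'c \<Rightarrow> real)"
  unfolding pareto_efficient_def
proof (intro allI impI)
  fix X Y :: 'c and p :: "('c \<Rightarrow> nat) \<Rightarrow> real"
  assume pu: "prefers_unanimously lam p X Y"
  obtain b where b: "b \<in> ballots lam" "b X \<noteq> b Y" "p b \<noteq> 0"
    using pu by (auto simp: prefers_unanimously_def)
  have "0 < (\<Sum>b\<in>ballots lam. p b * (w (b X) - w (b Y)))"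
    using unanimous_ballot_term[OF dec pu] b
    by (intro sum_pos2[OF finite_ballots b(1)]) auto
  then show "positional_method w lam p X > positional_method w lam p Y"
    using positional_method_diff[of w lam p X Y] by simp
qed

theorem mainTheorem9:
  fixes lam :: "nat list" and w :: "nat \<Rightarrow> real"
  assumes "card (UNIV :: 'c::finite set) \<ge> 2"
    and "is_composition lam (card (UNIV :: 'c set))"
  shows "pareto_efficient lam (positional_method w lam :: (('c \<Rightarrow> nat) \<Rightarrow> real) \<Rightarrow> 'c \<Rightarrow> real)
         \<longleftrightarrow> (\<forall>i j. 1 \<le> i \<longrightarrow> i < j \<longrightarrow> j \<le> length lam \<longrightarrow> w i > w j)"
  using pareto_efficient_imp_strictly_decreasing[OF assms(2)]
    strictly_decreasing_imp_pareto_efficient by blast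

end
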